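(* Let $F$ be a field of characteristic zero. Fix integers $d,\tau\ge0$ and let $\{\beta_i\}_{i\ge\tau}\subseteq F$ satisfy $$\beta_s\beta_t=(\beta_s+\beta_t)\beta_{s+t+d}\quad\text{for all } s,t\ge\tau.$$ Then either $\beta_i=0$ for all $i\ge\tau$, or there exist integers $k$ and $\Delta$ with $\beta_k\ne0$, $0\le k-\tau<\Delta\le k+d$ and $\Delta\mid k+d$, such that for all $t\ge\tau$ $$\beta_t=\begin{cases}\dfrac{(k+d)\beta_k}{k+d+\Delta s}, & t=k+\Delta s,\ s\ge0,\\ 0,&\text{otherwise}.\end{cases}$$ In particular, if $d=\tau=0$, then $\beta_i=0$ for all $i\ge0$. *)

theory Defs
  imports Main
begin

end

theory Submission
  imports Defs
begin

text \<open>Let \<open>S = {j \<ge> \<tau>. \<beta> j \<noteq> 0}\<close>. On \<open>S\<close> the recurrence reads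
  \<open>1/\<beta>(s+t+d) = 1/\<beta> s + 1/\<beta> t\<close>, so \<open>j \<mapsto> 1/\<beta> j\<close> is additive in the shifted index \<open>j + d\<close>.
  The recurrence also shows that, for \<open>i \<in> S\<close> and \<open>j \<ge> \<tau>\<close>, \<open>j \<in> S\<close> iff \<open>j + i + d \<in> S\<close>; comparing
  the shifts by the two smallest elements \<open>k < k'\<close> of \<open>S\<close> makes \<open>S\<close> periodic with period
  \<open>\<Delta> = k' - k\<close>, hence \<open>S = k + \<Delta>\<nat>\<close>, and \<open>k + k + d \<in> S\<close> gives \<open>\<Delta> dvd k + d\<close>.
  Finally, adding \<open>i\<close> to itself \<open>j + d\<close> times and \<open>j\<close> to itself \<open>i + d\<close> times reaches the same index,
  so \<open>(j + d) \<beta> j = (i + d) \<beta> i\<close> on \<open>S\<close>.\<close>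

lemma progression_if_periodic:
  fixes S :: "nat set"
  assumes "S \<subseteq> {\<tau>..}" and "0 < \<Delta>"
    and periodic: "\<And>j. \<tau> \<le> j \<Longrightarrow> j \<in> S \<longleftrightarrow> j + \<Delta> \<in> S"
    and "k \<in> S" and gap: "\<And>j. j \<in> S \<Longrightarrow> j < k + \<Delta> \<Longrightarrow> j = k"
  shows "S = range (\<lambda>s. k + \<Delta> * s)"
proof (intro equalityI subsetI)
  fix j assume "j \<in> S"
  then show "j \<in> range (\<lambda>s. k + \<Delta> * s)"
  proof (induction j rule: less_induct)
    case (less j)
    show ?case
    proof (cases "j < k + \<Delta>")
      case True
      then show ?thesis using gap[OF less.prems] by (simp add: image_iff)
    next
      case False
      then have "j - \<Delta> \<in> S"
        using periodic[of "j - \<Delta>"] less.prems \<open>k \<in> S\<close> \<open>S \<subseteq> {\<tau>..}\<close> by auto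
      then obtain s where "j - \<Delta> = k + \<Delta> * s" using less.IH[of "j - \<Delta>"] \<open>0 < \<Delta>\<close> False by auto
      then have "j = k + \<Delta> * Suc s" using False by simp
      then show ?thesis by blast
    qed
  qed
next
  fix j assume "j \<in> range (\<lambda>s. k + \<Delta> * s)"
  then obtain s where "j = k + \<Delta> * s" by blast
  moreover have "k + \<Delta> * s \<in> S" for s
  proof (induction s)
    case (Suc s)
    have "\<tau> \<le> k + \<Delta> * s" using \<open>k \<in> S\<close> \<open>S \<subseteq> {\<tau>..}\<close> by auto
    then have "k + \<Delta> * s + \<Delta> \<in> S" using periodic Suc.IH by blast
    then show ?case by (simp add: algebra_simps)
  qed (use \<open>k \<in> S\<close> in simp)
  ultimately show "j \<in> S" by simp
qed

locale reciprocal_recurrence =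
  fixes \<beta> :: "nat \<Rightarrow> 'a :: field" and d \<tau> :: nat
  assumes rec: "\<And>s t. \<tau> \<le> s \<Longrightarrow> \<tau> \<le> t \<Longrightarrow> \<beta> s * \<beta> t = (\<beta> s + \<beta> t) * \<beta> (s + t + d)"
begin

definition supp :: "nat set" where
  "supp = {j. \<tau> \<le> j \<and> \<beta> j \<noteq> 0}"

lemma supp_ge: "j \<in> supp \<Longrightarrow> \<tau> \<le> j"
  and supp_nonzero: "j \<in> supp \<Longrightarrow> \<beta> j \<noteq> 0"
  by (simp_all add: supp_def)

lemma supp_shift_iff:
  assumes "i \<in> supp" and "\<tau> \<le> j"
  shows "j + i + d \<in> supp \<longleftrightarrow> j \<in> supp"
  using rec[of i j] rec[of j i] assms by (auto simp: supp_def add_ac)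

lemma supp_add_closed: "i \<in> supp \<Longrightarrow> j \<in> supp \<Longrightarrow> i + j + d \<in> supp"
  using supp_shift_iff[of j i] by (simp add: supp_ge add_ac)

lemma supp_index_pos:
  assumes "i \<in> supp"
  shows "0 < i + d"
proof (rule ccontr)
  assume "\<not> 0 < i + d"
  then have "i = 0" "d = 0" by auto
  moreover have "\<tau> \<le> 0" using supp_ge[OF assms] \<open>i = 0\<close> by simp
  ultimately have "\<beta> 0 * \<beta> 0 = (\<beta> 0 + \<beta> 0) * \<beta> 0"
    using rec[of 0 0] by simp
  then have "\<beta> 0 * \<beta> 0 = 0" by (metis add_cancel_left_right distrib_right)
  then show False using assms \<open>i = 0\<close> by (simp add: supp_nonzero)
qed

lemma inverse_add_supp:
  assumes "i \<in> supp" and "j \<in> supp"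
  shows "inverse (\<beta> (i + j + d)) = inverse (\<beta> i) + inverse (\<beta> j)"
proof -
  have nz: "\<beta> i \<noteq> 0" "\<beta> j \<noteq> 0" "\<beta> (i + j + d) \<noteq> 0"
    using assms supp_add_closed[OF assms] by (simp_all add: supp_nonzero)
  have eq: "\<beta> i * \<beta> j = (\<beta> i + \<beta> j) * \<beta> (i + j + d)"
    using rec assms by (simp add: supp_ge)
  then have "\<beta> i + \<beta> j \<noteq> 0" using nz by auto
  have "inverse (\<beta> i) + inverse (\<beta> j) = (\<beta> i + \<beta> j) / (\<beta> i * \<beta> j)"
    using nz by (simp add: field_simps)
  also have "\<dots> = inverse (\<beta> (i + j + d))"
    unfolding eq using nonzero_divide_mult_cancel_left[OF \<open>\<beta> i + \<beta> j \<noteq> 0\<close>]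
    by (simp add: inverse_eq_divide)
  finally show ?thesis by simp
qed

lemma supp_iterate:
  assumes "i \<in> supp"
  shows "i + n * (i + d) \<in> supp \<and> inverse (\<beta> (i + n * (i + d))) = of_nat (Suc n) * inverse (\<beta> i)"
proof (induction n)
  case (Suc n)
  then have "i + n * (i + d) \<in> supp" by blast
  have "i + Suc n * (i + d) = (i + n * (i + d)) + i + d" by simp
  then show ?case
    using Suc supp_add_closed[OF \<open>i + n * (i + d) \<in> supp\<close> assms]
      inverse_add_supp[OF \<open>i + n * (i + d) \<in> supp\<close> assms]
    by (simp only:) (simp add: algebra_simps)
qed (use assms in simp)

lemma weighted_value_eq:
  assumes "i \<in> supp" and "j \<in> supp"
  shows "of_nat (j + d) * \<beta> j = of_nat (i + d) * \<beta> i"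
proof -
  obtain m n where m: "j + d = Suc m" and n: "i + d = Suc n"
    using supp_index_pos assms by (metis gr0_implies_Suc)
  have "i + m * (i + d) = j + n * (j + d)"
    using m n by (simp add: algebra_simps)
  then have "of_nat (Suc m) * inverse (\<beta> i) = of_nat (Suc n) * inverse (\<beta> j)"
    using supp_iterate[OF assms(1), of m] supp_iterate[OF assms(2), of n] by simp
  then show ?thesis
    using assms m n by (simp add: supp_nonzero field_simps del: of_nat_Suc)
qed

lemma supp_value:
  assumes "k \<in> supp" and "j \<in> supp" and "of_nat (j + d) \<noteq> (0 :: 'a)"
  shows "\<beta> j = of_nat (k + d) * \<beta> k / of_nat (j + d)"
  using weighted_value_eq[OF assms(1,2)] assms(3) by (simp add: eq_divide_eq mult.commute)

lemma supp_progression: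
  assumes "supp \<noteq> {}"
  obtains k \<Delta> where "k \<in> supp" "k - \<tau> < \<Delta>" "\<Delta> \<le> k + d" "\<Delta> dvd k + d"
    "supp = range (\<lambda>s. k + \<Delta> * s)"
proof -
  define k where "k = (LEAST j. j \<in> supp)"
  have "k \<in> supp" unfolding k_def using assms by (auto intro: LeastI)
  have k_min: "k \<le> j" if "j \<in> supp" for j unfolding k_def using that by (rule Least_le)
  have double: "k + k + d \<in> supp" "k < k + k + d"
    using supp_add_closed[OF \<open>k \<in> supp\<close> \<open>k \<in> supp\<close>] supp_index_pos[OF \<open>k \<in> supp\<close>] by simp_all
  define k' where "k' = (LEAST j. j \<in> supp \<and> k < j)"
  have "k' \<in> supp \<and> k < k'"
    unfolding k'_def by (rule LeastI[where k = "k + k + d"]) (simp add: double)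
  then have "k' \<in> supp" "k < k'" by simp_all
  have k'_min: "k' \<le> j" if "j \<in> supp" "k < j" for j
    unfolding k'_def by (rule Least_le) (simp add: that)
  define \<Delta> where "\<Delta> = k' - k"
  have "0 < \<Delta>" and k': "k' = k + \<Delta>" using \<open>k < k'\<close> by (simp_all add: \<Delta>_def)
  have periodic: "j \<in> supp \<longleftrightarrow> j + \<Delta> \<in> supp" if "\<tau> \<le> j" for j
    using supp_shift_iff[OF \<open>k' \<in> supp\<close> that] supp_shift_iff[OF \<open>k \<in> supp\<close>, of "j + \<Delta>"] that
    by (simp add: k' add_ac)
  have gap: "j = k" if "j \<in> supp" "j < k + \<Delta>" for j
    using k_min[OF that(1)] k'_min[OF that(1)] that(2) k' by fastforce
  have progression: "supp = range (\<lambda>s. k + \<Delta> * s)"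
    by (rule progression_if_periodic[OF _ \<open>0 < \<Delta>\<close> periodic \<open>k \<in> supp\<close> gap])
       (auto simp: supp_ge)
  have "k - \<tau> < \<Delta>"
  proof (rule ccontr)
    assume "\<not> k - \<tau> < \<Delta>"
    with supp_ge[OF \<open>k \<in> supp\<close>] have "\<tau> \<le> k - \<Delta>" "k - \<Delta> + \<Delta> = k" by auto
    then have "k - \<Delta> \<in> supp" using periodic[of "k - \<Delta>"] \<open>k \<in> supp\<close> by simp
    then show False using k_min[of "k - \<Delta>"] \<open>0 < \<Delta>\<close> \<open>k - \<Delta> + \<Delta> = k\<close> by simp
  qed
  moreover have "\<Delta> \<le> k + d" using k'_min[OF double] k' by simp
  moreover have "\<Delta> dvd k + d" using double(1) progression by auto
  ultimately show ?thesis using that \<open>k \<in> supp\<close> progression by blast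
qed

end

theorem lemma2p3:
  fixes \<beta> :: "nat \<Rightarrow> 'a :: field_char_0" and d \<tau> :: nat
  assumes rec: "\<And>s t. s \<ge> \<tau> \<Longrightarrow> t \<ge> \<tau> \<Longrightarrow>
                  \<beta> s * \<beta> t = (\<beta> s + \<beta> t) * \<beta> (s + t + d)"
  shows "((\<forall>i\<ge>\<tau>. \<beta> i = 0) \<or>
          (\<exists>k \<Delta> :: nat. \<beta> k \<noteq> 0 \<and> \<tau> \<le> k \<and> k - \<tau> < \<Delta> \<and> \<Delta> \<le> k + d \<and> \<Delta> dvd (k + d) \<and>
             (\<forall>s. \<beta> (k + \<Delta> * s) = of_nat (k + d) * \<beta> k / of_nat (k + d + \<Delta> * s)) \<and>
             (\<forall>t\<ge>\<tau>. (\<not> (\<exists>s. t = k + \<Delta> * s)) \<longrightarrow> \<beta> t = 0)))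
         \<and> (d = 0 \<and> \<tau> = 0 \<longrightarrow> (\<forall>i. \<beta> i = 0))"
proof -
  interpret reciprocal_recurrence \<beta> d \<tau> using rec by unfold_locales
  consider "supp = {}"
    | k \<Delta> where "k \<in> supp" "k - \<tau> < \<Delta>" "\<Delta> \<le> k + d" "\<Delta> dvd k + d"
        "supp = range (\<lambda>s. k + \<Delta> * s)"
    using supp_progression by metis
  then show ?thesis
  proof cases
    case 1
    then show ?thesis by (auto simp: supp_def)
  next
    case (2 k \<Delta>)
    have "\<beta> (k + \<Delta> * s) = of_nat (k + d) * \<beta> k / of_nat (k + d + \<Delta> * s)" for s
    proof -
      have "k + \<Delta> * s \<in> supp" using 2(5) by blast
      moreover have "of_nat (k + \<Delta> * s + d) \<noteq> (0 :: 'a)"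
        using supp_index_pos[OF \<open>k \<in> supp\<close>] by (simp only: of_nat_eq_0_iff)
      ultimately have "\<beta> (k + \<Delta> * s) = of_nat (k + d) * \<beta> k / of_nat (k + \<Delta> * s + d)"
        by (rule supp_value[OF \<open>k \<in> supp\<close>])
      then show ?thesis by (simp add: add_ac)
    qed
    moreover have "\<beta> t = 0" if "\<tau> \<le> t" "\<nexists>s. t = k + \<Delta> * s" for t
      using that 2(5) by (auto simp: supp_def)
    moreover have "\<not> (d = 0 \<and> \<tau> = 0)" using 2(2,3) by auto
    ultimately show ?thesis using 2(1-4) supp_nonzero supp_ge by blast
  qed
qed

end
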